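(* Let $G$ be a connected non-bipartite graph and $\phi$ a sub-additive admissible matching policy. Then every word $u\in\mathbb W_2$ admits an erasing word for $(G,\phi)$, i.e. there is $z\in\mathcal V^*$ of even length such that for all $\varsigma'\in\mathcal S^*$ with $|\varsigma'|=|z|$ and all $\varsigma\in\mathcal S^*$ with $|\varsigma|=|u|$, both having letters in the support of $\nu_\phi$, we have $Q_\phi(z,\varsigma')=\emptyset$ and $Q_\phi(uz,\varsigma\varsigma')=\emptyset$.
   Context: $G=(\mathcal V,\mathcal E)$ is a finite connected simple graph, $i - j$ denotes adjacency. A list of preferences $\sigma\in\mathcal S$ gives for each class $i$ a linear ordering of its neighbours; the policy $\phi$ comes with a probability $\nu_\phi$ on $\mathcal S$. $\mathbb W=\{w\in\mathcal V^*:|w|_i|w|_j=0 \text{ whenever } i - j\}$ and $\mathbb W_2$ is the set of words of $\mathbb W$ of even length. $\phi$ is admissible if there is a map $\odot_\phi:\mathbb W\times(\mathcal V\times\mathcal S)\to\mathbb W$ with $w\odot_\phi(v,\sigma)=wv$ if no letter of $w$ is adjacent to $v$, and otherwise $w$ with one letter adjacent to $v$ (chosen by $\phi$ as a function of $w,v,\sigma$) deleted. For $z=z_1\cdots z_k$, $\varsigma=\varsigma_1\cdots\varsigma_k$, $Q_\phi(z,\varsigma)=(\cdots(\emptyset\odot_\phi(z_1,\varsigma_1))\cdots)\odot_\phi(z_k,\varsigma_k)$. $\phi$ is sub-additive if $|Q_\phi(z'z'',\varsigma'\varsigma'')|\le|Q_\phi(z',\varsigma')|+|Q_\phi(z'',\varsigma'')|$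 for all words $z',z''$ and preference words $\varsigma',\varsigma''$ of matching lengths with letters in the support of $\nu_\phi$. *)

theory Defs
  imports Main "HOL-Probability.Probability_Mass_Function"
begin

definition simple_graph :: "'v set \<Rightarrow> ('v \<Rightarrow> 'v \<Rightarrow> bool) \<Rightarrow> bool" where
  "simple_graph V E \<longleftrightarrow> finite V \<and> V \<noteq> {} \<and>
     (\<forall>x y. E x y \<longrightarrow> x \<in> V \<and> y \<in> V) \<and>
     (\<forall>x y. E x y \<longrightarrow> E y x) \<and> (\<forall>x. \<not> E x x)"

definition connected_graph :: "'v set \<Rightarrow> ('v \<Rightarrow> 'v \<Rightarrow> bool) \<Rightarrow> bool" where
  "connected_graph V E \<longleftrightarrow> (\<forall>x\<in>V. \<forall>y\<in>V. E\<^sup>*\<^sup>* x y)"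

definition bipartite :: "'v set \<Rightarrow> ('v \<Rightarrow> 'v \<Rightarrow> bool) \<Rightarrow> bool" where
  "bipartite V E \<longleftrightarrow> (\<exists>A \<subseteq> V. \<forall>x y. E x y \<longrightarrow> (x \<in> A \<longleftrightarrow> y \<notin> A))"

definition pref_list :: "'v set \<Rightarrow> ('v \<Rightarrow> 'v \<Rightarrow> bool) \<Rightarrow> ('v \<Rightarrow> 'v list) \<Rightarrow> bool" where
  "pref_list V E \<sigma> \<longleftrightarrow> (\<forall>i\<in>V. distinct (\<sigma> i) \<and> set (\<sigma> i) = {j. E i j}) \<and>
     (\<forall>i. i \<notin> V \<longrightarrow> \<sigma> i = [])"

definition inW :: "'v set \<Rightarrow> ('v \<Rightarrow> 'v \<Rightarrow> bool) \<Rightarrow> 'v list \<Rightarrow> bool" where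
  "inW V E w \<longleftrightarrow> set w \<subseteq> V \<and>
     (\<forall>i j. E i j \<longrightarrow> count_list w i * count_list w j = 0)"

text \<open>A matching policy is given by its update map odot (w, v, sigma) and the
  probability nu on preference lists. Admissibility of the map:\<close>

definition admissible ::
  "'v set \<Rightarrow> ('v \<Rightarrow> 'v \<Rightarrow> bool) \<Rightarrow> ('v list \<Rightarrow> 'v \<Rightarrow> ('v \<Rightarrow> 'v list) \<Rightarrow> 'v list) \<Rightarrow> bool" where
  "admissible V E odot \<longleftrightarrow>
     (\<forall>w v \<sigma>. inW V E w \<and> v \<in> V \<and> pref_list V E \<sigma> \<longrightarrow>
        (if \<not> (\<exists>x\<in>set w. E x v) then odot w v \<sigma> = w @ [v]
         else (\<exists>k < length w. E (w ! k) v \<and> odot w v \<sigma> = take k w @ drop (Suc k) w)))"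

definition Qphi ::
  "('v list \<Rightarrow> 'v \<Rightarrow> ('v \<Rightarrow> 'v list) \<Rightarrow> 'v list) \<Rightarrow> 'v list \<Rightarrow> ('v \<Rightarrow> 'v list) list \<Rightarrow> 'v list" where
  "Qphi odot z \<sigma>s = foldl (\<lambda>w (v, \<sigma>). odot w v \<sigma>) [] (zip z \<sigma>s)"

definition sub_additive ::
  "'v set \<Rightarrow> ('v list \<Rightarrow> 'v \<Rightarrow> ('v \<Rightarrow> 'v list) \<Rightarrow> 'v list) \<Rightarrow> ('v \<Rightarrow> 'v list) pmf \<Rightarrow> bool" where
  "sub_additive V odot \<nu> \<longleftrightarrow>
     (\<forall>z1 z2 s1 s2. set z1 \<subseteq> V \<and> set z2 \<subseteq> V \<and>
        length s1 = length z1 \<and> length s2 = length z2 \<and>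
        set s1 \<subseteq> set_pmf \<nu> \<and> set s2 \<subseteq> set_pmf \<nu> \<longrightarrow>
        length (Qphi odot (z1 @ z2) (s1 @ s2))
          \<le> length (Qphi odot z1 s1) + length (Qphi odot z2 s2))"

definition erasing_word ::
  "'v set \<Rightarrow> ('v list \<Rightarrow> 'v \<Rightarrow> ('v \<Rightarrow> 'v list) \<Rightarrow> 'v list) \<Rightarrow> ('v \<Rightarrow> 'v list) pmf
   \<Rightarrow> 'v list \<Rightarrow> 'v list \<Rightarrow> bool" where
  "erasing_word V odot \<nu> u z \<longleftrightarrow> set z \<subseteq> V \<and> even (length z) \<and>
     (\<forall>s' s. length s' = length z \<and> set s' \<subseteq> set_pmf \<nu> \<and>
             length s = length u \<and> set s \<subseteq> set_pmf \<nu> \<longrightarrow>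
        Qphi odot z s' = [] \<and> Qphi odot (u @ z) (s @ s') = [])"

end

theory Submission
  imports Defs
begin

text \<open>A block \<open>p\<^sup>k q\<^sup>k\<close> with \<open>p - q\<close>
  empties the empty queue, hence by sub-additivity so does every concatenation of blocks, and it
  suffices to drive the multiset of \<open>u\<close> to the empty one by a concatenation of blocks.

  Fix a shortest odd cycle through \<open>c\<close>. A class \<open>b \<noteq> c\<close> is the start of a shortest even walk
  \<open>b, p, q, \<dots>, c\<close>, and serving the edge \<open>(p, q)\<close> or \<open>(q, p)\<close> shortens the queue or lowers
  \<open>\<Sum> 2\<^bsup>d(x)\<^esup>\<close>, \<open>d\<close> the even distance to \<open>c\<close>, over the classes present. This leaves \<open>2t\<close>
  copies of \<open>c\<close>. Feeding \<open>t\<close> copies of each vertex around the cycle, the first neighbour of \<open>c\<close>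
  removes \<open>t\<close> copies, the chordless middle of the cycle leaves the queue unchanged pair by pair,
  and the last neighbour removes the rest; as the cycle is odd, this word is a concatenation of
  blocks.\<close>

lemma relpowp_sym:
  assumes "symp E" and "(E ^^ n) x y"
  shows "(E ^^ n) y x"
  using assms(2)
proof (induction n arbitrary: y)
  case 0
  then show ?case by simp
next
  case (Suc n)
  then obtain w where "(E ^^ n) x w" "E w y" by (meson relpowp_Suc_E)
  with Suc.IH assms(1) have "E y w" "(E ^^ n) w x" by (auto dest: sympD)
  then show ?case by (rule relpowp_Suc_I2)
qed

lemma odd_closed_walk_if_not_bipartite:
  assumes "connected_graph V E" and "\<not> bipartite V E" and "symp E"
    and "\<And>x y. E x y \<Longrightarrow> x \<in> V \<and> y \<in> V"
  shows "\<exists>L c. odd L \<and> (E ^^ L) c c"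
proof -
  have "\<exists>x y. E x y"
    using assms(2) unfolding bipartite_def by (metis empty_iff empty_subsetI)
  then obtain r where r: "r \<in> V" using assms(4) by blast
  define A where "A = {y \<in> V. \<exists>n. even n \<and> (E ^^ n) r y}"
  have "A \<subseteq> V" unfolding A_def by blast
  then obtain x y where xy: "E x y" "x \<in> A \<longleftrightarrow> y \<in> A"
    using assms(2) unfolding bipartite_def by blast
  have V: "x \<in> V" "y \<in> V" using assms(4) xy(1) by auto
  have "\<exists>nx ny. (E ^^ nx) r x \<and> (E ^^ ny) r y \<and> (even nx \<longleftrightarrow> even ny)"
  proof (cases "x \<in> A")
    case True
    with xy(2) have "y \<in> A" by blast
    with \<open>x \<in> A\<close> show ?thesis unfolding A_def by blast
  next
    case False
    with xy(2) have "y \<notin> A" by blast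
    obtain nx ny where "(E ^^ nx) r x" "(E ^^ ny) r y"
      using assms(1) r V unfolding connected_graph_def rtranclp_power by blast
    moreover from calculation have "odd nx" "odd ny"
      using False \<open>y \<notin> A\<close> V unfolding A_def by blast+
    ultimately show ?thesis by blast
  qed
  then obtain nx ny where n: "(E ^^ nx) r x" "(E ^^ ny) r y" "even nx \<longleftrightarrow> even ny" by blast
  have "(E ^^ (Suc nx + ny)) r r"
    using relpowp_trans[OF relpowp_Suc_I[OF n(1) xy(1)] relpowp_sym[OF assms(3) n(2)]] .
  moreover have "odd (Suc nx + ny)" using n(3) by simp
  ultimately show ?thesis by blast
qed

lemma mset_take_drop_Suc:
  assumes "k < length w"
  shows "mset (take k w @ drop (Suc k) w) = mset w - {#w ! k#}"
proof -
  have "mset w = mset (take k w @ w ! k # drop (Suc k) w)"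
    using id_take_nth_drop[OF assms] by simp
  then show ?thesis by simp
qed

locale matching_policy =
  fixes V :: "'v set" and E :: "'v \<Rightarrow> 'v \<Rightarrow> bool"
    and odot :: "'v list \<Rightarrow> 'v \<Rightarrow> ('v \<Rightarrow> 'v list) \<Rightarrow> 'v list"
    and \<nu> :: "('v \<Rightarrow> 'v list) pmf"
  assumes graph: "simple_graph V E"
    and preferences: "set_pmf \<nu> \<subseteq> {\<sigma>. pref_list V E \<sigma>}"
    and policy_admissible: "admissible V E odot"
begin

lemma edge_in_V: "E x y \<Longrightarrow> x \<in> V \<and> y \<in> V"
  using graph unfolding simple_graph_def by blast

lemma edge_sym: "E x y \<Longrightarrow> E y x"
  using graph unfolding simple_graph_def by blast

lemma edge_irrefl: "\<not> E x x"
  using graph unfolding simple_graph_def by blast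

lemma finite_V: "finite V"
  using graph unfolding simple_graph_def by blast

lemma symp_edge: "symp E"
  by (rule sympI) (rule edge_sym)

definition inW_mset :: "'v multiset \<Rightarrow> bool" where
  "inW_mset X \<longleftrightarrow> set_mset X \<subseteq> V \<and> (\<forall>i j. E i j \<longrightarrow> count X i * count X j = 0)"

lemma inW_iff_inW_mset: "inW V E w \<longleftrightarrow> inW_mset (mset w)"
  unfolding inW_def inW_mset_def by (simp add: count_mset)

lemma inW_mset_no_edge: "inW_mset X \<Longrightarrow> x \<in># X \<Longrightarrow> y \<in># X \<Longrightarrow> \<not> E x y"
  unfolding inW_mset_def by (metis count_eq_zero_iff mult_is_0)

lemma inW_mset_add:
  assumes "inW_mset X" "v \<in> V" "\<forall>x\<in>#X. \<not> E x v"
  shows "inW_mset (add_mset v X)"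
  unfolding inW_mset_def
proof (intro conjI allI impI)
  show "set_mset (add_mset v X) \<subseteq> V" using assms(1,2) unfolding inW_mset_def by simp
  fix i j assume "E i j"
  moreover have "count X i * count X j = 0" using assms(1) \<open>E i j\<close> unfolding inW_mset_def by blast
  moreover have "i = v \<Longrightarrow> count X j = 0" "j = v \<Longrightarrow> count X i = 0"
    using assms(3) \<open>E i j\<close> edge_sym by (meson not_in_iff)+
  ultimately show "count (add_mset v X) i * count (add_mset v X) j = 0"
    using edge_irrefl by (cases "i = v"; cases "j = v") auto
qed

lemma inW_mset_subset: "inW_mset Y \<Longrightarrow> X \<subseteq># Y \<Longrightarrow> inW_mset X"
  unfolding inW_mset_def
proof (intro conjI allI impI)
  assume Y: "set_mset Y \<subseteq> V \<and> (\<forall>i j. E i j \<longrightarrow> count Y i * count Y j = 0)" and "X \<subseteq># Y"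
  then show "set_mset X \<subseteq> V" using set_mset_mono by blast
  fix i j assume "E i j"
  then have "count Y i = 0 \<or> count Y j = 0" using Y by simp
  then show "count X i * count X j = 0"
    using \<open>X \<subseteq># Y\<close> by (metis mset_subset_eq_count le_zero_eq mult_is_0)
qed

lemma mset_odot:
  assumes "inW V E w" and "v \<in> V" and "\<sigma> \<in> set_pmf \<nu>"
  obtains "\<forall>x\<in>set w. \<not> E x v" "mset (odot w v \<sigma>) = add_mset v (mset w)"
  | a where "a \<in> set w" "E a v" "mset (odot w v \<sigma>) = mset w - {#a#}"
proof -
  have "pref_list V E \<sigma>" using assms(3) preferences by auto
  then have spec: "if \<not> (\<exists>x\<in>set w. E x v) then odot w v \<sigma> = w @ [v]
      else (\<exists>k < length w. E (w ! k) v \<and> odot w v \<sigma> = take k w @ drop (Suc k) w)"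
    using policy_admissible assms(1,2) unfolding admissible_def by blast
  then show thesis
  proof (cases "\<exists>x\<in>set w. E x v")
    case True
    then obtain k where "k < length w" "E (w ! k) v" "odot w v \<sigma> = take k w @ drop (Suc k) w"
      using spec by auto
    then show thesis using that(2)[of "w ! k"] mset_take_drop_Suc[of k w] nth_mem[of k w] by simp
  qed (use that(1) in auto)
qed

lemma inW_odot:
  assumes "inW V E w" and "v \<in> V" and "\<sigma> \<in> set_pmf \<nu>"
  shows "inW V E (odot w v \<sigma>)"
  using assms
proof (cases rule: mset_odot)
  case 1
  then show ?thesis using assms(1,2) inW_mset_add[of "mset w" v] by (simp add: inW_iff_inW_mset)
next
  case (2 a)
  then show ?thesis using assms(1) inW_mset_subset[of "mset w"] by (simp add: inW_iff_inW_mset)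
qed

definition run :: "'v list \<Rightarrow> 'v list \<Rightarrow> ('v \<Rightarrow> 'v list) list \<Rightarrow> 'v list" where
  "run w z ss = foldl (\<lambda>w (v, \<sigma>). odot w v \<sigma>) w (zip z ss)"

lemma Qphi_eq_run: "Qphi odot z ss = run [] z ss"
  unfolding Qphi_def run_def by simp

lemma run_Nil [simp]: "run w [] ss = w"
  unfolding run_def by simp

lemma run_Cons [simp]: "run w (v # z) (\<sigma> # ss) = run (odot w v \<sigma>) z ss"
  unfolding run_def by simp

lemma run_append:
  "length ss1 = length z1 \<Longrightarrow> run w (z1 @ z2) (ss1 @ ss2) = run (run w z1 ss1) z2 ss2"
  unfolding run_def by simp

lemma inW_append_left: "inW V E (w @ u) \<Longrightarrow> inW V E w"
  using inW_mset_subset[of "mset (w @ u)" "mset w"] by (simp add: inW_iff_inW_mset)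

lemma run_inW_append:
  "inW V E (w @ u) \<Longrightarrow> length ss = length u \<Longrightarrow> set ss \<subseteq> set_pmf \<nu> \<Longrightarrow> run w u ss = w @ u"
proof (induction u arbitrary: w ss)
  case (Cons v u)
  then obtain \<sigma> ss' where ss: "ss = \<sigma> # ss'" by (cases ss) auto
  have W: "inW_mset (mset (w @ v # u))" using Cons.prems(1) by (simp add: inW_iff_inW_mset)
  have "v \<in> V" using Cons.prems(1) unfolding inW_def by auto
  moreover have "\<forall>x\<in>set w. \<not> E x v" using inW_mset_no_edge[OF W] by auto
  ultimately have "odot w v \<sigma> = w @ [v]"
    using policy_admissible inW_append_left[OF Cons.prems(1)] preferences ss Cons.prems(3)
    unfolding admissible_def by auto
  then show ?case using Cons ss by simp
qed simp

definition moves :: "'v multiset \<Rightarrow> 'v list \<Rightarrow> 'v multiset \<Rightarrow> bool" where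
  "moves X z Y \<longleftrightarrow> (\<forall>w ss. inW V E w \<and> mset w = X \<and> length ss = length z \<and>
      set ss \<subseteq> set_pmf \<nu> \<longrightarrow> inW V E (run w z ss) \<and> mset (run w z ss) = Y)"

lemma moves_Nil: "moves X [] X"
  unfolding moves_def by simp

lemma moves_Cons:
  assumes "v \<in> V"
    and "\<And>w \<sigma>. inW V E w \<Longrightarrow> mset w = X \<Longrightarrow> \<sigma> \<in> set_pmf \<nu> \<Longrightarrow> moves (mset (odot w v \<sigma>)) z Y"
  shows "moves X (v # z) Y"
  unfolding moves_def
proof (intro allI impI)
  fix w ss
  assume h: "inW V E w \<and> mset w = X \<and> length ss = length (v # z) \<and> set ss \<subseteq> set_pmf \<nu>"
  then obtain \<sigma> ss' where ss: "ss = \<sigma> # ss'" by (cases ss) auto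
  have "moves (mset (odot w v \<sigma>)) z Y" using assms(2) h ss by auto
  moreover have "inW V E (odot w v \<sigma>)" using inW_odot h ss assms(1) by auto
  ultimately show "inW V E (run w (v # z) ss) \<and> mset (run w (v # z) ss) = Y"
    using h ss unfolding moves_def by simp
qed

lemma moves_append: "moves X z1 Y \<Longrightarrow> moves Y z2 Z \<Longrightarrow> moves X (z1 @ z2) Z"
  unfolding moves_def
proof (intro allI impI)
  fix w ss
  assume m1: "\<forall>w ss. inW V E w \<and> mset w = X \<and> length ss = length z1 \<and> set ss \<subseteq> set_pmf \<nu>
      \<longrightarrow> inW V E (run w z1 ss) \<and> mset (run w z1 ss) = Y"
    and m2: "\<forall>w ss. inW V E w \<and> mset w = Y \<and> length ss = length z2 \<and> set ss \<subseteq> set_pmf \<nu>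
      \<longrightarrow> inW V E (run w z2 ss) \<and> mset (run w z2 ss) = Z"
    and h: "inW V E w \<and> mset w = X \<and> length ss = length (z1 @ z2) \<and> set ss \<subseteq> set_pmf \<nu>"
  define ss1 ss2 where "ss1 = take (length z1) ss" and "ss2 = drop (length z1) ss"
  have ss: "ss = ss1 @ ss2" "length ss1 = length z1" "length ss2 = length z2"
    "set ss1 \<subseteq> set_pmf \<nu>" "set ss2 \<subseteq> set_pmf \<nu>"
    using h unfolding ss1_def ss2_def by (auto dest: in_set_takeD in_set_dropD)
  have "inW V E (run w z1 ss1) \<and> mset (run w z1 ss1) = Y" using m1 h ss by blast
  then show "inW V E (run w (z1 @ z2) ss) \<and> mset (run w (z1 @ z2) ss) = Z"
    using m2 ss by (simp add: run_append)
qed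

lemma moves_inW_mset:
  assumes "moves X z Y" and "inW_mset X"
  shows "inW_mset Y"
proof -
  obtain w where w: "mset w = X" using ex_mset by blast
  obtain \<sigma> where \<sigma>: "\<sigma> \<in> set_pmf \<nu>" using set_pmf_not_empty by fast
  have "inW V E w" using w assms(2) by (simp add: inW_iff_inW_mset)
  then have "inW V E (run w z (replicate (length z) \<sigma>))
      \<and> mset (run w z (replicate (length z) \<sigma>)) = Y"
    by (intro assms(1)[unfolded moves_def, rule_format]) (use w \<sigma> \<open>inW V E w\<close> in auto)
  then show ?thesis by (metis inW_iff_inW_mset)
qed

abbreviation nbrs :: "'v multiset \<Rightarrow> 'v \<Rightarrow> 'v multiset" where
  "nbrs X v \<equiv> filter_mset (\<lambda>x. E x v) X"

abbreviation non_nbrs :: "'v multiset \<Rightarrow> 'v \<Rightarrow> 'v multiset" where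
  "non_nbrs X v \<equiv> filter_mset (\<lambda>x. \<not> E x v) X"

lemma size_nbrs_non_nbrs: "size X = size (nbrs X v) + size (non_nbrs X v)"
  by (metis multiset_partition size_union)

lemma moves_replicate_saturating:
  assumes "v \<in> V" and "size (nbrs X v) \<le> k"
  shows "moves X (replicate k v) (non_nbrs X v + replicate_mset (k - size (nbrs X v)) v)"
  using assms(2)
proof (induction k arbitrary: X)
  case 0
  then have "non_nbrs X v = X" by (metis add_0 le_zero_eq multiset_partition size_eq_0_iff_empty)
  then show ?case by (simp add: moves_Nil)
next
  case (Suc k)
  show ?case unfolding replicate_Suc
  proof (rule moves_Cons[OF assms(1)])
    fix w \<sigma> assume w: "inW V E w" "mset w = X" "\<sigma> \<in> set_pmf \<nu>"
    from w(1) assms(1) w(3) show "moves (mset (odot w v \<sigma>)) (replicate k v)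
        (non_nbrs X v + replicate_mset (Suc k - size (nbrs X v)) v)"
    proof (cases rule: mset_odot)
      case 1
      then have e: "nbrs (add_mset v X) v = {#}" "nbrs X v = {#}"
        using w(2) edge_irrefl by (auto simp: filter_mset_eq_conv)
      show ?thesis
        using Suc.IH[of "add_mset v X", unfolded e] 1 w(2) edge_irrefl unfolding e by simp
    next
      case (2 a)
      then have a: "a \<in># nbrs X v" using w(2) by auto
      then have "size (nbrs (X - {#a#}) v) = size (nbrs X v) - 1"
        by (simp add: size_Diff_singleton)
      moreover have "0 < size (nbrs X v)" using a by (auto dest: multi_member_split)
      moreover have "non_nbrs (X - {#a#}) v = non_nbrs X v" using 2 by simp
      ultimately show ?thesis using 2 w(2) Suc.IH[of "X - {#a#}"] Suc.prems by simp
    qed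
  qed
qed

lemma moves_replicate_single_neighbour:
  assumes "E a v" and "\<forall>x\<in>#Y. \<not> E x v"
  shows "moves (Y + replicate_mset n a) (replicate k v)
    (Y + replicate_mset (n - k) a + replicate_mset (k - n) v)"
  using assms(2)
proof (induction k arbitrary: Y n)
  case 0
  then show ?case by (simp add: moves_Nil)
next
  case (Suc k)
  have v: "v \<in> V" using assms(1) edge_in_V by blast
  show ?case unfolding replicate_Suc
  proof (rule moves_Cons[OF v])
    fix w \<sigma> assume w: "inW V E w" "mset w = Y + replicate_mset n a" "\<sigma> \<in> set_pmf \<nu>"
    from w(1) v w(3) show "moves (mset (odot w v \<sigma>)) (replicate k v)
        (Y + replicate_mset (n - Suc k) a + replicate_mset (Suc k - n) v)"
    proof (cases rule: mset_odot)
      case 1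
      then have "n = 0"
        using w(2) assms(1) by (metis in_replicate_mset set_mset_mset union_iff neq0_conv)
      moreover have "\<forall>x\<in>#add_mset v Y. \<not> E x v" using Suc.prems edge_irrefl by simp
      ultimately show ?thesis using 1 w(2) Suc.IH[of "add_mset v Y" 0] by simp
    next
      case (2 b)
      then have "b = a" "0 < n" using w(2) Suc.prems
        by (metis in_replicate_mset set_mset_mset union_iff neq0_conv)+
      then have "mset (odot w v \<sigma>) = Y + replicate_mset (n - 1) a"
        using 2 w(2) by (cases n) auto
      then show ?thesis using Suc.IH[OF Suc.prems, of "n - 1"] \<open>0 < n\<close> by simp
    qed
  qed
qed

inductive block_word :: "'v list \<Rightarrow> bool" where
  empty: "block_word []"
| block: "E p q \<Longrightarrow> block_word z \<Longrightarrow> block_word (replicate k p @ replicate k q @ z)"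

lemma block_word_append: "block_word z1 \<Longrightarrow> block_word z2 \<Longrightarrow> block_word (z1 @ z2)"
  by (induction rule: block_word.induct) (auto intro: block_word.block)

lemma block_word_pair: "E p q \<Longrightarrow> block_word (replicate k p @ replicate k q)"
  using block_word.block[OF _ block_word.empty] by fastforce

lemma block_word_in_V: "block_word z \<Longrightarrow> set z \<subseteq> V"
  by (induction rule: block_word.induct) (auto dest: edge_in_V)

lemma block_word_even: "block_word z \<Longrightarrow> even (length z)"
  by (induction rule: block_word.induct) auto

lemma moves_pair:
  assumes "E p q"
  shows "moves {#} (replicate k p @ replicate k q) {#}"
proof -
  have "moves {#} (replicate k p) (replicate_mset k p)"
    using moves_replicate_single_neighbour[of q p "{#}" 0 k] edge_sym[OF assms] by simp
  moreover have "moves (replicate_mset k p) (replicate k q) {#}"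
    using moves_replicate_single_neighbour[of p q "{#}" k k] assms by simp
  ultimately show ?thesis by (rule moves_append)
qed

definition block_reach :: "'v multiset \<Rightarrow> 'v multiset \<Rightarrow> bool" where
  "block_reach X Y \<longleftrightarrow> (\<exists>z. block_word z \<and> moves X z Y)"

lemma block_reach_refl: "block_reach X X"
  unfolding block_reach_def using block_word.empty moves_Nil by blast

lemma block_reach_trans: "block_reach X Y \<Longrightarrow> block_reach Y Z \<Longrightarrow> block_reach X Z"
  unfolding block_reach_def using block_word_append moves_append by blast

lemma block_reach_inW_mset: "block_reach X Y \<Longrightarrow> inW_mset X \<Longrightarrow> inW_mset Y"
  unfolding block_reach_def using moves_inW_mset by blast

text \<open>Serve \<open>p\<close> until its compatible classes are exhausted, then as many \<open>q\<close>: the classes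
  compatible with \<open>q\<close> that are left are matched, and the surplus of \<open>q\<close> stays.\<close>

lemma block_reach_edge:
  assumes "E p q" and "size (nbrs (non_nbrs X p) q) \<le> size (nbrs X p)"
  shows "block_reach X
    (non_nbrs (non_nbrs X p) q + replicate_mset (size (nbrs X p) - size (nbrs (non_nbrs X p) q)) q)"
proof -
  let ?m = "size (nbrs X p)"
  have "moves X (replicate ?m p) (non_nbrs X p)"
    using moves_replicate_saturating[of p X ?m] edge_in_V[OF assms(1)] by simp
  moreover have "moves (non_nbrs X p) (replicate ?m q)
      (non_nbrs (non_nbrs X p) q + replicate_mset (?m - size (nbrs (non_nbrs X p) q)) q)"
    by (rule moves_replicate_saturating) (use edge_in_V[OF assms(1)] assms(2) in auto)
  ultimately have "moves X (replicate ?m p @ replicate ?m q)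
      (non_nbrs (non_nbrs X p) q + replicate_mset (?m - size (nbrs (non_nbrs X p) q)) q)"
    by (rule moves_append)
  then show ?thesis unfolding block_reach_def using block_word_pair[OF assms(1)] by blast
qed

lemma Qphi_Nil_if_moves_empty:
  assumes "moves {#} z {#}" and "length ss = length z" and "set ss \<subseteq> set_pmf \<nu>"
  shows "Qphi odot z ss = []"
proof -
  have "inW V E []" by (simp add: inW_def)
  then have "mset (run [] z ss) = {#}"
    using assms(1)[unfolded moves_def, rule_format, of "[]" ss] assms(2,3) by simp
  then show ?thesis by (simp add: Qphi_eq_run)
qed

end

locale connected_policy = matching_policy +
  assumes connected: "connected_graph V E"

locale erasing_setting = connected_policy +
  assumes not_bipartite: "\<not> bipartite V E"
    and subadditive: "sub_additive V odot \<nu>"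
begin

text \<open>A single block is only known to vanish from the empty queue; sub-additivity is what lets
  the blocks vanish one after another.\<close>

lemma block_word_vanishes:
  "block_word z \<Longrightarrow> length ss = length z \<Longrightarrow> set ss \<subseteq> set_pmf \<nu> \<Longrightarrow> Qphi odot z ss = []"
proof (induction arbitrary: ss rule: block_word.induct)
  case empty
  then show ?case by (simp add: Qphi_eq_run)
next
  case (block p q z k)
  let ?b = "replicate k p @ replicate k q"
  define ss1 ss2 where "ss1 = take (length ?b) ss" and "ss2 = drop (length ?b) ss"
  have ss: "ss = ss1 @ ss2" "length ss1 = length ?b" "length ss2 = length z"
    "set ss1 \<subseteq> set_pmf \<nu>" "set ss2 \<subseteq> set_pmf \<nu>"
    using block.prems unfolding ss1_def ss2_def by (auto dest: in_set_takeD in_set_dropD)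
  have "Qphi odot ?b ss1 = []"
    using Qphi_Nil_if_moves_empty[OF moves_pair[OF block.hyps(1)] ss(2,4)] .
  moreover have "Qphi odot z ss2 = []" using block.IH ss(3,5) .
  moreover have "set ?b \<subseteq> V" "set z \<subseteq> V"
    using block_word_in_V[OF block_word_pair[OF block.hyps(1)]] block_word_in_V[OF block.hyps(2)]
    by auto
  ultimately show ?case
    using subadditive[unfolded sub_additive_def, rule_format, of ?b z ss1 ss2] ss by simp
qed

end

locale odd_cycle = connected_policy V E odot \<nu>
  for V :: "'v set" and E and odot and \<nu> +
  fixes len :: nat and cyc :: "nat \<Rightarrow> 'v"
  assumes odd_len: "odd len"
    and cyc_closed: "cyc len = cyc 0"
    and cyc_edge: "i < len \<Longrightarrow> E (cyc i) (cyc (Suc i))"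
    and len_shortest: "odd n \<Longrightarrow> (E ^^ n) x x \<Longrightarrow> len \<le> n"
begin

abbreviation base :: 'v where "base \<equiv> cyc 0"

lemma cyc_walk: "m + n \<le> len \<Longrightarrow> (E ^^ n) (cyc m) (cyc (m + n))"
proof (induction n)
  case (Suc n)
  then show ?case using cyc_edge[of "m + n"] by (auto intro: relpowp_Suc_I)
qed simp

lemma base_closed_walk: "(E ^^ len) base base"
  using cyc_walk[of 0 len] cyc_closed by simp

lemma len_ge_3: "3 \<le> len"
proof -
  have "len \<noteq> 1" using base_closed_walk edge_irrefl by (metis relpowp_1)
  then show ?thesis using odd_len by presburger
qed

lemma base_in_V: "base \<in> V"
  using cyc_edge[of 0] len_ge_3 edge_in_V by simp

lemma base_no_chord:
  assumes "2 \<le> j" and "j + 2 \<le> len"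
  shows "\<not> E base (cyc j)"
proof
  assume e: "E base (cyc j)"
  have "(E ^^ j) base (cyc j)" using cyc_walk[of 0 j] assms by simp
  then have c1: "(E ^^ Suc j) base base" using edge_sym[OF e] by (rule relpowp_Suc_I)
  have "(E ^^ (len - j)) (cyc j) base" using cyc_walk[of j "len - j"] assms cyc_closed by simp
  with e have c2: "(E ^^ Suc (len - j)) base base" by (rule relpowp_Suc_I2)
  have "odd (Suc j) \<or> odd (Suc (len - j))" using odd_len assms by presburger
  then have "len \<le> Suc j \<or> len \<le> Suc (len - j)"
    using c1 c2 len_shortest[of "Suc j" base] len_shortest[of "Suc (len - j)" base] by blast
  then show False using assms by linarith
qed

definition cycle_word :: "nat \<Rightarrow> nat \<Rightarrow> nat \<Rightarrow> 'v list" where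
  "cycle_word t i n = concat (map (\<lambda>j. replicate t (cyc j)) [i..<i + n])"

lemma cycle_word_add: "cycle_word t i (m + n) = cycle_word t i m @ cycle_word t (i + m) n"
proof -
  have "[i..<i + (m + n)] = [i..<i + m] @ [i + m..<i + m + n]"
    using upt_add_eq_append[of i "i + m" n] by (simp add: add.assoc)
  then show ?thesis unfolding cycle_word_def by simp
qed

lemma cycle_word_single: "cycle_word t i (Suc 0) = replicate t (cyc i)"
  unfolding cycle_word_def by simp

lemma cycle_word_2: "cycle_word t i 2 = replicate t (cyc i) @ replicate t (cyc (Suc i))"
  unfolding cycle_word_def by (simp add: numeral_2_eq_2)

lemma block_word_cycle_word: "i + 2 * k \<le> len \<Longrightarrow> block_word (cycle_word t i (2 * k))"
proof (induction k)
  case 0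
  then show ?case by (simp add: cycle_word_def block_word.empty)
next
  case (Suc k)
  have "cycle_word t i (2 * Suc k) = cycle_word t i (2 * k) @ cycle_word t (i + 2 * k) 2"
    using cycle_word_add[of t i "2 * k" 2] by simp
  moreover have "block_word (cycle_word t i (2 * k))" using Suc by simp
  moreover have "E (cyc (i + 2 * k)) (cyc (Suc (i + 2 * k)))" using cyc_edge Suc.prems by simp
  ultimately show ?case by (simp add: cycle_word_2 block_word_append block_word_pair)
qed

lemma moves_cycle_word_base:
  "2 + 2 * k < len \<Longrightarrow> moves (replicate_mset t base) (cycle_word t 2 (2 * k)) (replicate_mset t base)"
proof (induction k)
  case 0
  then show ?case by (simp add: cycle_word_def moves_Nil)
next
  case (Suc k)
  let ?B = "replicate_mset t base" and ?d = "cyc (2 + 2 * k)" and ?v = "cyc (Suc (2 + 2 * k))"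
  have dv: "E ?d ?v" using cyc_edge Suc.prems by simp
  have "\<not> E base ?d" "\<not> E base ?v" using base_no_chord Suc.prems by simp_all
  then have "moves ?B (replicate t ?d) (?B + replicate_mset t ?d)"
    and "moves (?B + replicate_mset t ?d) (replicate t ?v) ?B"
    using moves_replicate_single_neighbour[of ?v ?d ?B 0 t]
      moves_replicate_single_neighbour[of ?d ?v ?B t t] dv edge_sym[OF dv]
    by simp_all
  then have "moves ?B (replicate t ?d @ replicate t ?v) ?B"
    by (rule moves_append)
  moreover have "cycle_word t 2 (2 * Suc k)
      = cycle_word t 2 (2 * k) @ replicate t ?d @ replicate t ?v"
    using cycle_word_add[of t 2 "2 * k" 2] by (simp add: cycle_word_2)
  ultimately show ?case using moves_append[OF Suc.IH] Suc.prems by simp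
qed

lemma block_reach_base_empty: "block_reach (replicate_mset (2 * t) base) {#}"
proof -
  obtain l where l: "len = 2 * l + 1" using odd_len oddE by blast
  define k where "k = l - 1"
  have lk: "l = Suc k" using l len_ge_3 unfolding k_def by simp
  have "cycle_word t 1 (2 * l)
      = cycle_word t 1 1 @ cycle_word t 2 (2 * k) @ cycle_word t (2 + 2 * k) 1"
    using cycle_word_add[of t 1 1 "2 * k + 1"] cycle_word_add[of t 2 "2 * k" 1] lk
    by (simp add: numeral_2_eq_2)
  then have word: "cycle_word t 1 (2 * l)
      = replicate t (cyc 1) @ cycle_word t 2 (2 * k) @ replicate t (cyc (2 * l))"
    using lk by (simp add: cycle_word_single)
  have "E base (cyc 1)" using cyc_edge[of 0] len_ge_3 by simp
  then have m1: "moves (replicate_mset (2 * t) base) (replicate t (cyc 1)) (replicate_mset t base)"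
    using moves_replicate_single_neighbour[of base "cyc 1" "{#}" "2 * t" t] by simp
  have m2: "moves (replicate_mset t base) (cycle_word t 2 (2 * k)) (replicate_mset t base)"
    using moves_cycle_word_base l lk by simp
  have "E base (cyc (2 * l))" using cyc_edge[of "2 * l"] cyc_closed l edge_sym by simp
  then have m3: "moves (replicate_mset t base) (replicate t (cyc (2 * l))) {#}"
    using moves_replicate_single_neighbour[of base "cyc (2 * l)" "{#}" t t] by simp
  have "moves (replicate_mset (2 * t) base) (cycle_word t 1 (2 * l)) {#}"
    unfolding word by (rule moves_append[OF m1 moves_append[OF m2 m3]])
  moreover have "block_word (cycle_word t 1 (2 * l))" using block_word_cycle_word l by simp
  ultimately show ?thesis unfolding block_reach_def by blast
qed

definition even_dist :: "'v \<Rightarrow> nat" where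
  "even_dist b = (LEAST n. even n \<and> (E ^^ n) b base)"

lemma even_walk_to_base:
  assumes "b \<in> V"
  shows "\<exists>n. even n \<and> (E ^^ n) b base"
proof -
  obtain n where n: "(E ^^ n) b base"
    using connected assms base_in_V unfolding connected_graph_def rtranclp_power by blast
  show ?thesis
  proof (cases "even n")
    case False
    then show ?thesis
      using relpowp_trans[OF n base_closed_walk] odd_len by (intro exI[of _ "n + len"]) auto
  qed (use n in blast)
qed

lemma even_dist_walk: "b \<in> V \<Longrightarrow> even (even_dist b) \<and> (E ^^ even_dist b) b base"
  unfolding even_dist_def by (rule LeastI_ex) (rule even_walk_to_base)

lemma even_dist_le: "even n \<Longrightarrow> (E ^^ n) b base \<Longrightarrow> even_dist b \<le> n"
  unfolding even_dist_def by (simp add: Least_le)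

definition potential :: "'v set \<Rightarrow> nat" where
  "potential S = (\<Sum>c\<in>S. 2 ^ even_dist c)"

text \<open>As \<open>potential (set_mset X) \<le> potential V\<close> on queues, this orders queues lexicographically
  by length, then by potential.\<close>

definition weight :: "'v multiset \<Rightarrow> nat" where
  "weight X = size X * (potential V + 1) + potential (set_mset X)"

lemma weight_less:
  assumes "inW_mset X'"
    and "size X' < size X \<or> size X' = size X \<and> potential (set_mset X') < potential (set_mset X)"
  shows "weight X' < weight X"
proof -
  have "set_mset X' \<subseteq> V" using assms(1) unfolding inW_mset_def by simp
  then have "potential (set_mset X') \<le> potential V"
    unfolding potential_def using finite_V by (intro sum_mono2) auto
  then have "weight X' < (size X' + 1) * (potential V + 1)" unfolding weight_def by simp
  moreover have "size X' < size X \<Longrightarrow> (size X' + 1) * (potential V + 1) \<le> weight X"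
    unfolding weight_def by (metis Suc_eq_plus1 Suc_leI mult_le_mono1 trans_le_add1)
  ultimately show ?thesis using assms(2) unfolding weight_def by fastforce
qed

lemma potential_insert_less:
  assumes "finite S" and "b \<in> S" and "T \<subseteq> S - {b}" and "even_dist q \<le> even_dist b"
    and "even_dist q < even_dist b \<or> (\<exists>c\<in>S - {b}. c \<notin> T)"
  shows "potential (insert q T) < potential S"
proof -
  have S: "potential S = potential (S - {b}) + 2 ^ even_dist b"
    unfolding potential_def using assms(1,2) by (simp add: sum.remove)
  have "finite T" using assms(1,3) by (meson finite_Diff finite_subset)
  then have "potential (insert q T) \<le> potential T + 2 ^ even_dist q"
    unfolding potential_def by (simp add: sum.insert_if)
  moreover have "potential T + 2 ^ even_dist q < potential (S - {b}) + 2 ^ even_dist b"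
  proof (cases "even_dist q < even_dist b")
    case True
    have "potential T \<le> potential (S - {b})"
      unfolding potential_def using assms(1,3) by (simp add: sum_mono2)
    moreover have "(2::nat) ^ even_dist q < 2 ^ even_dist b" using True by simp
    ultimately show ?thesis by linarith
  next
    case False
    then obtain c where c: "c \<in> S - {b}" "c \<notin> T" using assms(5) by blast
    have "potential T \<le> potential (S - {b} - {c})"
      unfolding potential_def using assms(1,3) c by (intro sum_mono2) auto
    moreover have "potential (S - {b}) = potential (S - {b} - {c}) + 2 ^ even_dist c"
      unfolding potential_def using assms(1) c(1) by (simp add: sum.remove)
    moreover have "(2::nat) ^ even_dist q \<le> 2 ^ even_dist b" using assms(4) by simp
    moreover have "(0::nat) < 2 ^ even_dist c" by simp
    ultimately show ?thesis by linarith
  qed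
  ultimately show ?thesis using S by linarith
qed

lemma edge_descent:
  assumes X: "inW_mset X" "even (size X)" and pq: "E p q"
    and le: "size (nbrs (non_nbrs X p) q) \<le> size (nbrs X p)"
    and dec: "0 < size (nbrs (non_nbrs X p) q)
      \<or> potential (insert q (set_mset (non_nbrs X p))) < potential (set_mset X)"
  shows "\<exists>X'. block_reach X X' \<and> inW_mset X' \<and> even (size X') \<and> weight X' < weight X"
proof -
  let ?m = "size (nbrs X p)" and ?r = "size (nbrs (non_nbrs X p) q)"
  define X' where "X' = non_nbrs (non_nbrs X p) q + replicate_mset (?m - ?r) q"
  have reach: "block_reach X X'" unfolding X'_def using block_reach_edge[OF pq le] .
  have X': "inW_mset X'" using block_reach_inW_mset[OF reach X(1)] .
  have "size X = ?m + ?r + size (non_nbrs (non_nbrs X p) q)"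
    using size_nbrs_non_nbrs[of X p] size_nbrs_non_nbrs[of "non_nbrs X p" q] by simp
  then have size: "size X' + 2 * ?r = size X" unfolding X'_def using le by simp
  have "set_mset X' \<subseteq> insert q (set_mset (non_nbrs X p))" unfolding X'_def by auto
  then have "potential (set_mset X') \<le> potential (insert q (set_mset (non_nbrs X p)))"
    unfolding potential_def by (intro sum_mono2) auto
  then have "size X' < size X \<or> size X' = size X \<and> potential (set_mset X') < potential (set_mset X)"
    using size dec by auto
  then have "weight X' < weight X" by (rule weight_less[OF X'])
  moreover have "even (size X')" using size X(2) by presburger
  ultimately show ?thesis using reach X' by blast
qed

lemma descent:
  assumes X: "inW_mset X" "even (size X)" and "\<not> set_mset X \<subseteq> {base}"
  shows "\<exists>X'. block_reach X X' \<and> inW_mset X' \<and> even (size X') \<and> weight X' < weight X"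
proof -
  obtain b where b: "b \<in># X" "b \<noteq> base" using assms(3) by blast
  then have "b \<in> V" using X(1) unfolding inW_mset_def by blast
  then have d: "even (even_dist b)" "(E ^^ even_dist b) b base" using even_dist_walk by auto
  have "even_dist b \<noteq> 0" using d(2) b(2) by (metis relpowp_0_E)
  moreover obtain m where "even_dist b = 2 * m" using d(1) by (rule evenE)
  ultimately obtain n where n: "even_dist b = Suc (Suc n)" "even n" by (cases m) auto
  then obtain p where bp: "E b p" and "(E ^^ Suc n) p base"
    using d(2) relpowp_Suc_D2 by metis
  then obtain q where pq: "E p q" and qw: "(E ^^ n) q base"
    using relpowp_Suc_D2 by metis
  have q_closer: "even_dist q < even_dist b" using even_dist_le[OF n(2) qw] n(1) by simp
  have p_close: "even_dist p \<le> even_dist b" if bq: "E b q"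
  proof -
    have "(E ^^ Suc (Suc n)) p base"
      using relpowp_Suc_I2[OF edge_sym[OF bp] relpowp_Suc_I2[OF bq qw]] .
    then show ?thesis using even_dist_le n by simp
  qed
  have fin: "finite (set_mset X)" by simp
  show ?thesis
  proof (cases "size (nbrs (non_nbrs X p) q) \<le> size (nbrs X p)")
    case True
    have "set_mset (non_nbrs X p) \<subseteq> set_mset X - {b}" using bp by auto
    then have "potential (insert q (set_mset (non_nbrs X p))) < potential (set_mset X)"
      using potential_insert_less[OF fin _ _ less_imp_le[OF q_closer]] b(1) q_closer by blast
    then show ?thesis using edge_descent[OF X pq True] by blast
  next
    case False
    have "size (nbrs (non_nbrs X q) p) \<le> size (nbrs X p)"
      by (intro size_mset_mono multiset_filter_mono) simp
    moreover have "size (nbrs (non_nbrs X p) q) \<le> size (nbrs X q)"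
      by (intro size_mset_mono multiset_filter_mono) simp
    ultimately have le: "size (nbrs (non_nbrs X q) p) \<le> size (nbrs X q)" using False by linarith
    have "0 < size (nbrs (non_nbrs X q) p)
      \<or> potential (insert p (set_mset (non_nbrs X q))) < potential (set_mset X)"
    proof (cases "0 < size (nbrs (non_nbrs X q) p)")
      case no_p_side: False
      have bq: "E b q"
      proof (rule ccontr)
        assume "\<not> E b q"
        then have "b \<in># nbrs (non_nbrs X q) p" using b(1) bp by simp
        then show False using no_p_side by (auto dest: multi_member_split)
      qed
      have "nbrs (non_nbrs X p) q \<noteq> {#}" using False by force
      then obtain c where "c \<in># nbrs (non_nbrs X p) q" by (meson multiset_nonemptyE)
      then have c: "c \<in> set_mset X - {b}" "c \<notin> set_mset (non_nbrs X q)" using bp by auto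
      have "set_mset (non_nbrs X q) \<subseteq> set_mset X - {b}" using bq by auto
      then show ?thesis using potential_insert_less[OF fin b(1) _ p_close[OF bq]] c by blast
    qed simp
    then show ?thesis using edge_descent[OF X edge_sym[OF pq] le] by blast
  qed
qed

lemma block_reach_base:
  "inW_mset X \<Longrightarrow> even (size X) \<Longrightarrow> \<exists>t. block_reach X (replicate_mset (2 * t) base)"
proof (induction X rule: measure_induct_rule[of weight])
  case (less X)
  show ?case
  proof (cases "set_mset X \<subseteq> {base}")
    case True
    then have "X = replicate_mset (size X) base" by (rule set_mset_subset_singletonD)
    moreover obtain t where "size X = 2 * t" using less.prems(2) by blast
    ultimately have "X = replicate_mset (2 * t) base" by simp
    then show ?thesis using block_reach_refl by blast
  next
    case False
    then obtain X' where "block_reach X X'" "inW_mset X'" "even (size X')" "weight X' < weight X"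
      using descent less.prems by blast
    then show ?thesis using less.IH block_reach_trans by blast
  qed
qed

lemma block_reach_empty: "inW_mset X \<Longrightarrow> even (size X) \<Longrightarrow> block_reach X {#}"
  using block_reach_base block_reach_base_empty block_reach_trans by blast

end

context erasing_setting
begin

lemma ex_odd_cycle: "\<exists>len cyc. odd_cycle V E odot \<nu> len cyc"
proof -
  have ex: "\<exists>L. odd L \<and> (\<exists>c. (E ^^ L) c c)"
    using odd_closed_walk_if_not_bipartite[OF connected not_bipartite symp_edge] edge_in_V by blast
  define L where "L = (LEAST L. odd L \<and> (\<exists>c. (E ^^ L) c c))"
  have "odd L \<and> (\<exists>c. (E ^^ L) c c)" unfolding L_def by (rule LeastI_ex[OF ex])
  then obtain c where L: "odd L" "(E ^^ L) c c" by blast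
  then obtain f where f: "f 0 = c" "f L = c" "\<forall>i<L. E (f i) (f (Suc i))"
    using relpowp_fun_conv by metis
  have "L \<le> n" if "odd n" "(E ^^ n) x x" for n x
    unfolding L_def using that by (blast intro: Least_le)
  then have "odd_cycle V E odot \<nu> L f"
    using L f by unfold_locales auto
  then show ?thesis by blast
qed

lemma erasing_word_exists:
  assumes "inW V E u" and "even (length u)"
  shows "\<exists>z. erasing_word V odot \<nu> u z"
proof -
  obtain len cyc where "odd_cycle V E odot \<nu> len cyc" using ex_odd_cycle by blast
  then interpret odd_cycle V E odot \<nu> len cyc .
  have "block_reach (mset u) {#}"
    using block_reach_empty assms by (simp add: inW_iff_inW_mset)
  then obtain z where z: "block_word z" "moves (mset u) z {#}" unfolding block_reach_def by blast
  have "Qphi odot z s' = [] \<and> Qphi odot (u @ z) (s @ s') = []"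
    if s: "length s' = length z" "set s' \<subseteq> set_pmf \<nu>" "length s = length u" "set s \<subseteq> set_pmf \<nu>"
    for s s'
  proof
    show "Qphi odot z s' = []" using block_word_vanishes z(1) s(1,2) .
    have "Qphi odot (u @ z) (s @ s') = run u z s'"
      using run_inW_append[of "[]" u s] assms(1) s(3,4) by (simp add: Qphi_eq_run run_append)
    moreover have "mset (run u z s') = {#}" using z(2) assms(1) s(1,2) unfolding moves_def by blast
    ultimately show "Qphi odot (u @ z) (s @ s') = []" by simp
  qed
  then show ?thesis
    using block_word_in_V[OF z(1)] block_word_even[OF z(1)] unfolding erasing_word_def by blast
qed

end

theorem mainTheorem8:
  fixes V :: "'v set" and E :: "'v \<Rightarrow> 'v \<Rightarrow> bool"
    and odot :: "'v list \<Rightarrow> 'v \<Rightarrow> ('v \<Rightarrow> 'v list) \<Rightarrow> 'v list"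
    and \<nu> :: "('v \<Rightarrow> 'v list) pmf"
  assumes "simple_graph V E" and "connected_graph V E" and "\<not> bipartite V E"
    and "set_pmf \<nu> \<subseteq> {\<sigma>. pref_list V E \<sigma>}"
    and "admissible V E odot" and "sub_additive V odot \<nu>"
  shows "\<forall>u. inW V E u \<and> even (length u) \<longrightarrow> (\<exists>z. erasing_word V odot \<nu> u z)"
proof -
  interpret erasing_setting V E odot \<nu> using assms by unfold_locales
  show ?thesis using erasing_word_exists by blast
qed

end
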